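(* Let $M$ be a bicomplex Hilbert space (as defined below), $V$ its associated complex vector space, and $A:M\to M$ a $\mathbb{T}$-linear operator having a bicomplex adjoint $A^*$. For $k=1,2$ let $P_k(A):M\to V$ be $P_k(A)|\psi\rangle:=P_k(A|\psi\rangle)$. Let $|\psi\rangle=\mathbf{e_1}|\psi_{\mathbf{e_1}}\rangle+\mathbf{e_2}|\psi_{\mathbf{e_2}}\rangle\in M$ with $|\psi_{\mathbf{e_k}}\rangle\in V$. Then (i) $A|\psi\rangle=\mathbf{e_1}P_1(A)|\psi_{\mathbf{e_1}}\rangle+\mathbf{e_2}P_2(A)|\psi_{\mathbf{e_2}}\rangle$; (ii) for $k=1,2$, $P_k(A)^*=P_k(A^* )$, where $P_k(A)^*$ denotes the standard adjoint, with respect to the restriction of $(\cdot,\cdot)$ to $V$ (a complex inner product over $\mathbb{C}(\mathbf{i_1})$), of the restriction of $P_k(A)$ to $V$ (and $P_k(A^* )$ is likewise restricted to $V$).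
   Context: Bicomplex numbers: $\mathbb{T}=\{z_1+z_2\mathbf{i_2}: z_1,z_2\in\mathbb{C}(\mathbf{i_1})\}$, $\mathbb{C}(\mathbf{i_1})=\{x+y\mathbf{i_1}: x,y\in\mathbb{R}\}$, $\mathbf{i_1}^2=\mathbf{i_2}^2=-1$, $\mathbf{i_1}\mathbf{i_2}=\mathbf{i_2}\mathbf{i_1}=\mathbf{j}$, $\mathbf{j}^2=1$ (commutative). Hyperbolic numbers $\mathbb{D}=\{x+y\mathbf{j}:x,y\in\mathbb{R}\}$. Idempotents $\mathbf{e_1}=(1+\mathbf{j})/2$, $\mathbf{e_2}=(1-\mathbf{j})/2$. Conjugation: $(z_1+z_2\mathbf{i_2})^{\dagger_3}=\overline{z_1}-\overline{z_2}\mathbf{i_2}$. $\mathbb{D}^+=\{a\mathbf{e_1}+b\mathbf{e_2}: a,b\ge 0\}$. $M$ is a free $\mathbb{T}$-module with finite basis $\{|m_1\rangle,\dots,|m_n\rangle\}$, $V=\{\sum x_l|m_l\rangle: x_l\in\mathbb{C}(\mathbf{i_1})\}$; for $|\phi\rangle=\sum x_l|m_l\rangle$ with $x_l=x_{1l}\mathbf{e_1}+x_{2l}\mathbf{e_2}$, $x_{kl}\in\mathbb{C}(\mathbf{i_1})$, set $P_k(|\phi\rangle)=|\phi_{\mathbf{e_k}}\rangle=\sum_l x_{kl}|m_l\rangle\in V$, so $|\phi\rangle=\mathbf{e_1}|\phi_{\mathbf{e_1}}\rangle+\mathbf{e_2}|\phi_{\mathbf{e_2}}\rangle$ uniquely.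 $M$ carries a bicomplex scalar product $(\cdot,\cdot):M\times M\to\mathbb{T}$: additive in the second argument, $(|\phi\rangle,\alpha|\psi\rangle)=\alpha(|\phi\rangle,|\psi\rangle)$ for $\alpha\in\mathbb{T}$, $(|\phi\rangle,|\psi\rangle)=(|\psi\rangle,|\phi\rangle)^{\dagger_3}$, $(|\phi\rangle,|\phi\rangle)=0\iff|\phi\rangle=0$, hyperbolic positive ($(|\phi\rangle,|\phi\rangle)\in\mathbb{D}^+$) and closed on $V$ ($(|\phi\rangle,|\psi\rangle)\in\mathbb{C}(\mathbf{i_1})$ for $|\phi\rangle,|\psi\rangle\in V$); "bicomplex Hilbert space" means moreover $M$ is complete for the norm $\|\phi\|=\big((\|\phi_{\mathbf{e_1}}\|^2+\|\phi_{\mathbf{e_2}}\|^2)/2\big)^{1/2}$, $\|\chi\|=(\chi,\chi)^{1/2}$ on $V$. Write $\langle\phi|\psi\rangle=(|\phi\rangle,|\psi\rangle)$. The bicomplex adjoint of $A$ is the operator $A^*:M\to M$ such that $(A|\psi\rangle,|\phi\rangle)=(|\psi\rangle,A^*|\phi\rangle)$ for all $|\phi\rangle,|\psi\rangle\in M$ (equivalently $\langle\psi|A^*|\phi\rangle=\langle\phi|A|\psi\rangle^{\dagger_3}$). *)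

theory Defs
  imports Complex_Main
begin

text \<open>A bicomplex number z1 + z2 i2 with z1, z2 in C(i1) is represented as BC z1 z2,
  where Isabelle's complex type plays the role of C(i1) (its imaginary unit is i1).\<close>

datatype bicomplex = BC (bc1: complex) (bc2: complex)

instantiation bicomplex :: comm_ring_1
begin
definition "0 = BC 0 0"
definition "1 = BC 1 0"
definition "x + y = BC (bc1 x + bc1 y) (bc2 x + bc2 y)"
definition "x - y = BC (bc1 x - bc1 y) (bc2 x - bc2 y)"
definition "- x = BC (- bc1 x) (- bc2 x)"
definition "x * y = BC (bc1 x * bc1 y - bc2 x * bc2 y) (bc1 x * bc2 y + bc2 x * bc1 y)"
instance
  by standard (auto simp: zero_bicomplex_def one_bicomplex_def plus_bicomplex_def
      minus_bicomplex_def uminus_bicomplex_def times_bicomplex_def algebra_simps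
      intro: bicomplex.expand)
end

definition bc_of :: "complex \<Rightarrow> bicomplex" where "bc_of z = BC z 0"
definition bc_i2 :: bicomplex where "bc_i2 = BC 0 1"
definition bc_j :: bicomplex where "bc_j = bc_of \<i> * bc_i2"
definition bc_e1 :: bicomplex where "bc_e1 = (1 + bc_j) * bc_of (1/2)"
definition bc_e2 :: bicomplex where "bc_e2 = (1 - bc_j) * bc_of (1/2)"

definition conj3 :: "bicomplex \<Rightarrow> bicomplex" where
  "conj3 w = BC (cnj (bc1 w)) (- cnj (bc2 w))"

text \<open>Idempotent components: w = e1 * bc_of (idem1 w) + e2 * bc_of (idem2 w).\<close>
definition idem1 :: "bicomplex \<Rightarrow> complex" where "idem1 w = bc1 w - \<i> * bc2 w"
definition idem2 :: "bicomplex \<Rightarrow> complex" where "idem2 w = bc1 w + \<i> * bc2 w"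

definition Dplus :: "bicomplex set" where
  "Dplus = {bc_of (complex_of_real a) * bc_e1 + bc_of (complex_of_real b) * bc_e2 | a b. a \<ge> 0 \<and> b \<ge> 0}"

section \<open>The free module M = T^n (coordinates w.r.t. the basis m_1..m_n indexed by 'n)\<close>

type_synonym 'n bcvec = "'n \<Rightarrow> bicomplex"

definition vadd :: "'n bcvec \<Rightarrow> 'n bcvec \<Rightarrow> 'n bcvec" where "vadd \<phi> \<psi> = (\<lambda>l. \<phi> l + \<psi> l)"
definition vsub :: "'n bcvec \<Rightarrow> 'n bcvec \<Rightarrow> 'n bcvec" where "vsub \<phi> \<psi> = (\<lambda>l. \<phi> l - \<psi> l)"
definition vscale :: "bicomplex \<Rightarrow> 'n bcvec \<Rightarrow> 'n bcvec" where "vscale \<alpha> \<phi> = (\<lambda>l. \<alpha> * \<phi> l)"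

definition Vspace :: "'n bcvec set" where "Vspace = {\<phi>. \<forall>l. \<phi> l \<in> range bc_of}"

definition P1 :: "'n bcvec \<Rightarrow> 'n bcvec" where "P1 \<phi> = (\<lambda>l. bc_of (idem1 (\<phi> l)))"
definition P2 :: "'n bcvec \<Rightarrow> 'n bcvec" where "P2 \<phi> = (\<lambda>l. bc_of (idem2 (\<phi> l)))"

definition bc_scalar_product :: "('n bcvec \<Rightarrow> 'n bcvec \<Rightarrow> bicomplex) \<Rightarrow> bool" where
  "bc_scalar_product sp \<longleftrightarrow>
     (\<forall>\<phi> \<psi> \<chi>. sp \<phi> (vadd \<psi> \<chi>) = sp \<phi> \<psi> + sp \<phi> \<chi>) \<and>
     (\<forall>\<phi> \<psi> \<alpha>. sp \<phi> (vscale \<alpha> \<psi>) = \<alpha> * sp \<phi> \<psi>) \<and>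
     (\<forall>\<phi> \<psi>. sp \<phi> \<psi> = conj3 (sp \<psi> \<phi>)) \<and>
     (\<forall>\<phi>. sp \<phi> \<phi> = 0 \<longleftrightarrow> \<phi> = (\<lambda>l. 0)) \<and>
     (\<forall>\<phi>. sp \<phi> \<phi> \<in> Dplus) \<and>
     (\<forall>\<phi> \<in> Vspace. \<forall>\<psi> \<in> Vspace. sp \<phi> \<psi> \<in> range bc_of)"

text \<open>Norm on V: ||chi|| = (chi,chi)^(1/2) (the value (chi,chi) is a nonnegative real).\<close>
definition Vnorm :: "('n bcvec \<Rightarrow> 'n bcvec \<Rightarrow> bicomplex) \<Rightarrow> 'n bcvec \<Rightarrow> real" where
  "Vnorm sp \<chi> = sqrt (Re (bc1 (sp \<chi> \<chi>)))"

definition Mnorm :: "('n bcvec \<Rightarrow> 'n bcvec \<Rightarrow> bicomplex) \<Rightarrow> 'n bcvec \<Rightarrow> real" where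
  "Mnorm sp \<phi> = sqrt (((Vnorm sp (P1 \<phi>))\<^sup>2 + (Vnorm sp (P2 \<phi>))\<^sup>2) / 2)"

definition bc_hilbert_space :: "('n bcvec \<Rightarrow> 'n bcvec \<Rightarrow> bicomplex) \<Rightarrow> bool" where
  "bc_hilbert_space sp \<longleftrightarrow> bc_scalar_product sp \<and>
     (\<forall>X :: nat \<Rightarrow> 'n bcvec.
        (\<forall>e>0. \<exists>N. \<forall>m\<ge>N. \<forall>k\<ge>N. Mnorm sp (vsub (X m) (X k)) < e) \<longrightarrow>
        (\<exists>L. (\<lambda>k. Mnorm sp (vsub (X k) L)) \<longlonglongrightarrow> 0))"

definition T_linear :: "('n bcvec \<Rightarrow> 'n bcvec) \<Rightarrow> bool" where
  "T_linear A \<longleftrightarrow> (\<forall>\<phi> \<psi>. A (vadd \<phi> \<psi>) = vadd (A \<phi>) (A \<psi>)) \<and>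
                  (\<forall>\<alpha> \<phi>. A (vscale \<alpha> \<phi>) = vscale \<alpha> (A \<phi>))"

definition bc_adjoint :: "('n bcvec \<Rightarrow> 'n bcvec \<Rightarrow> bicomplex) \<Rightarrow> ('n bcvec \<Rightarrow> 'n bcvec) \<Rightarrow> ('n bcvec \<Rightarrow> 'n bcvec) \<Rightarrow> bool" where
  "bc_adjoint sp A Astar \<longleftrightarrow> (\<forall>\<phi> \<psi>. sp (A \<psi>) \<phi> = sp \<psi> (Astar \<phi>))"

definition V_adjoint :: "('n bcvec \<Rightarrow> 'n bcvec \<Rightarrow> bicomplex) \<Rightarrow> ('n bcvec \<Rightarrow> 'n bcvec) \<Rightarrow> ('n bcvec \<Rightarrow> 'n bcvec) \<Rightarrow> bool" where
  "V_adjoint sp B C \<longleftrightarrow> (\<forall>\<chi>\<in>Vspace. B \<chi> \<in> Vspace \<and> C \<chi> \<in> Vspace) \<and>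
     (\<forall>\<phi>\<in>Vspace. \<forall>\<psi>\<in>Vspace. sp (B \<psi>) \<phi> = sp \<psi> (C \<phi>))"

end

theory Submission
  imports Defs
begin

text \<open>Writing a bicomplex number as e1 a + e2 b, the idempotents act independently on the two
  complex coordinates a = idem1 w, b = idem2 w, and conj3 conjugates each coordinate. A T-linear
  operator therefore acts on e1 psi_e1 through P1 only, which gives (i). For (ii), the scalar
  product of two vectors of V is complex, so for chi in V the value (chi, P1 phi) is the first
  idempotent coordinate of (chi, phi), and symmetrically on the left; the bicomplex adjoint
  identity thus passes to the first coordinates, which is the adjoint identity for P1(A).\<close>

lemmas bicomplex_ring_defs =
  zero_bicomplex_def one_bicomplex_def plus_bicomplex_def minus_bicomplex_def times_bicomplex_def

lemma bc_e1_eq: "bc_e1 = BC (1/2) (\<i>/2)"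
  by (simp add: bc_e1_def bc_j_def bc_i2_def bc_of_def bicomplex_ring_defs)

lemma bc_e2_eq: "bc_e2 = BC (1/2) (-\<i>/2)"
  by (simp add: bc_e2_def bc_j_def bc_i2_def bc_of_def bicomplex_ring_defs)

lemma idempotent_decomposition: "w = bc_e1 * bc_of (idem1 w) + bc_e2 * bc_of (idem2 w)"
  by (cases w) (simp add: bc_e1_eq bc_e2_eq bc_of_def idem1_def idem2_def bicomplex_ring_defs
      field_simps)

lemma idem_idempotent_sum:
  "idem1 (bc_e1 * bc_of a + bc_e2 * bc_of b) = a"
  "idem2 (bc_e1 * bc_of a + bc_e2 * bc_of b) = b"
  by (simp_all add: bc_e1_eq bc_e2_eq bc_of_def idem1_def idem2_def bicomplex_ring_defs
      field_simps)

lemma bc_e_times_bc_of_idem: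
  "bc_e1 * bc_of (idem1 w) = bc_e1 * w"
  "bc_e2 * bc_of (idem2 w) = bc_e2 * w"
  by (cases w, simp add: bc_e1_eq bc_e2_eq bc_of_def idem1_def idem2_def bicomplex_ring_defs
      field_simps)+

lemma conj3_bc_of: "conj3 (bc_of z) = bc_of (cnj z)"
  by (simp add: conj3_def bc_of_def)

lemma idem_conj3:
  "idem1 (conj3 w) = cnj (idem1 w)"
  "idem2 (conj3 w) = cnj (idem2 w)"
  by (simp_all add: conj3_def idem1_def idem2_def)

lemma vec_idempotent_decomposition:
  "\<phi> = vadd (vscale bc_e1 (P1 \<phi>)) (vscale bc_e2 (P2 \<phi>))"
  unfolding vadd_def vscale_def P1_def P2_def using idempotent_decomposition by auto

lemma vscale_bc_e_P:
  "vscale bc_e1 (P1 \<phi>) = vscale bc_e1 \<phi>"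
  "vscale bc_e2 (P2 \<phi>) = vscale bc_e2 \<phi>"
  by (simp_all add: vscale_def P1_def P2_def bc_e_times_bc_of_idem)

lemma P_in_Vspace: "P1 \<phi> \<in> Vspace" "P2 \<phi> \<in> Vspace"
  by (auto simp: Vspace_def P1_def P2_def)

lemma T_linear_idempotent_decomposition:
  assumes "T_linear A"
  shows "A \<psi> = vadd (vscale bc_e1 (P1 (A (P1 \<psi>)))) (vscale bc_e2 (P2 (A (P2 \<psi>))))"
proof -
  have "A \<psi> = vadd (vscale bc_e1 (A (P1 \<psi>))) (vscale bc_e2 (A (P2 \<psi>)))"
    using assms unfolding T_linear_def by (metis vec_idempotent_decomposition)
  then show ?thesis by (simp add: vscale_bc_e_P)
qed

lemma scalar_product_P_right:
  assumes sp: "bc_scalar_product sp" and "\<chi> \<in> Vspace"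
  shows "sp \<chi> (P1 \<phi>) = bc_of (idem1 (sp \<chi> \<phi>))"
    and "sp \<chi> (P2 \<phi>) = bc_of (idem2 (sp \<chi> \<phi>))"
proof -
  have "sp \<chi> \<psi> \<in> range bc_of" if "\<psi> \<in> Vspace" for \<psi>
    using sp \<open>\<chi> \<in> Vspace\<close> that unfolding bc_scalar_product_def by blast
  then obtain a b where a: "sp \<chi> (P1 \<phi>) = bc_of a" and b: "sp \<chi> (P2 \<phi>) = bc_of b"
    using P_in_Vspace by blast
  have lin: "sp \<chi> (vadd \<psi> \<psi>') = sp \<chi> \<psi> + sp \<chi> \<psi>'" "sp \<chi> (vscale \<alpha> \<psi>) = \<alpha> * sp \<chi> \<psi>"
    for \<psi> \<psi>' \<alpha>
    using sp unfolding bc_scalar_product_def by blast+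
  have "sp \<chi> \<phi> = sp \<chi> (vadd (vscale bc_e1 (P1 \<phi>)) (vscale bc_e2 (P2 \<phi>)))"
    by (rule arg_cong[OF vec_idempotent_decomposition])
  also have "\<dots> = bc_e1 * bc_of a + bc_e2 * bc_of b"
    by (simp only: lin a b)
  finally have "sp \<chi> \<phi> = bc_e1 * bc_of a + bc_e2 * bc_of b" .
  then show "sp \<chi> (P1 \<phi>) = bc_of (idem1 (sp \<chi> \<phi>))" "sp \<chi> (P2 \<phi>) = bc_of (idem2 (sp \<chi> \<phi>))"
    by (simp_all add: a b idem_idempotent_sum)
qed

lemma scalar_product_P_left:
  assumes sp: "bc_scalar_product sp" and "\<chi> \<in> Vspace"
  shows "sp (P1 \<phi>) \<chi> = bc_of (idem1 (sp \<phi> \<chi>))"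
    and "sp (P2 \<phi>) \<chi> = bc_of (idem2 (sp \<phi> \<chi>))"
proof -
  have conj_sym: "\<And>\<phi> \<psi>. sp \<phi> \<psi> = conj3 (sp \<psi> \<phi>)"
    using sp unfolding bc_scalar_product_def by blast
  show "sp (P1 \<phi>) \<chi> = bc_of (idem1 (sp \<phi> \<chi>))" "sp (P2 \<phi>) \<chi> = bc_of (idem2 (sp \<phi> \<chi>))"
    using scalar_product_P_right[OF assms, of \<phi>]
    by (subst (1 2) conj_sym, simp add: conj3_bc_of idem_conj3)+
qed

lemma V_adjoint_P:
  assumes sp: "bc_scalar_product sp" and "bc_adjoint sp A Astar"
  shows "V_adjoint sp (\<lambda>\<chi>. P1 (A \<chi>)) (\<lambda>\<chi>. P1 (Astar \<chi>))"
    and "V_adjoint sp (\<lambda>\<chi>. P2 (A \<chi>)) (\<lambda>\<chi>. P2 (Astar \<chi>))"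
proof -
  have adj: "sp (A \<psi>) \<phi> = sp \<psi> (Astar \<phi>)" for \<phi> \<psi>
    using assms(2) unfolding bc_adjoint_def by blast
  show "V_adjoint sp (\<lambda>\<chi>. P1 (A \<chi>)) (\<lambda>\<chi>. P1 (Astar \<chi>))"
    "V_adjoint sp (\<lambda>\<chi>. P2 (A \<chi>)) (\<lambda>\<chi>. P2 (Astar \<chi>))"
    unfolding V_adjoint_def
    by (simp_all add: P_in_Vspace scalar_product_P_left[OF sp] scalar_product_P_right[OF sp] adj)
qed

theorem mainTheorem19:
  fixes sp :: "('n::finite) bcvec \<Rightarrow> 'n bcvec \<Rightarrow> bicomplex"
    and A Astar :: "'n bcvec \<Rightarrow> 'n bcvec"
    and \<psi> :: "'n bcvec"
  assumes "bc_hilbert_space sp"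
    and "T_linear A"
    and "bc_adjoint sp A Astar"
  shows "A \<psi> = vadd (vscale bc_e1 (P1 (A (P1 \<psi>)))) (vscale bc_e2 (P2 (A (P2 \<psi>))))
       \<and> V_adjoint sp (\<lambda>\<chi>. P1 (A \<chi>)) (\<lambda>\<chi>. P1 (Astar \<chi>))
       \<and> V_adjoint sp (\<lambda>\<chi>. P2 (A \<chi>)) (\<lambda>\<chi>. P2 (Astar \<chi>))"
proof -
  have "bc_scalar_product sp"
    using assms(1) by (simp add: bc_hilbert_space_def)
  then show ?thesis
    using T_linear_idempotent_decomposition[OF assms(2)] V_adjoint_P[OF _ assms(3)] by blast
qed

end
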